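(* Let $X_1,\ldots,X_n$ be non-empty sets and $S\subset X_1\times\cdots\times X_n$ be relatively full. Then every maximal good subset $M\subset S$ is full.
   Context: $\Pi_i$ denotes the canonical projection onto $X_i$. A subset $T$ is good if every complex-valued function $f$ on $T$ can be written as $f(x_1,\ldots,x_n)=u_1(x_1)+\cdots+u_n(x_n)$ on $T$ for suitable functions $u_i$ on $X_i$. $T$ is full if it is a maximal good subset of $\Pi_1T\times\cdots\times\Pi_nT$. A maximal good subset of $S$ is a good subset of $S$ not strictly contained in any other good subset of $S$. $U(S)$ denotes the set of functions $f$ on $S$ for which there exist functions $u_i$ on $\Pi_iS$ with $f=u_1+\cdots+u_n$ on $S$. The set $S$ is relatively full if there exist $x_i^0\in\Pi_iS$, $1\le i\le n-1$, such that every $f\in U(S)$ has a unique representation $f=u_1+\cdots+u_n$ on $S$ (with $u_i$ functions on $\Pi_iS$) once the values $u_i(x_i^0)$, $1\le i\le n-1$, are prescribed. *)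

theory Defs
  imports Complex_Main "HOL-Library.FuncSet"
begin

text \<open>Points of X_1 x ... x X_n are extensional functions on the index set {..<n}
  (indices 0..n-1), elements of PiE {..<n} X.\<close>

definition proj :: "nat \<Rightarrow> (nat \<Rightarrow> 'a) set \<Rightarrow> 'a set" where
  "proj i T = (\<lambda>x. x i) ` T"

definition represents :: "nat \<Rightarrow> (nat \<Rightarrow> 'a \<Rightarrow> complex) \<Rightarrow> ((nat \<Rightarrow> 'a) \<Rightarrow> complex) \<Rightarrow> (nat \<Rightarrow> 'a) set \<Rightarrow> bool" where
  "represents n u f T \<longleftrightarrow> (\<forall>x\<in>T. f x = (\<Sum>i<n. u i (x i)))"

definition good :: "nat \<Rightarrow> (nat \<Rightarrow> 'a) set \<Rightarrow> bool" where
  "good n T \<longleftrightarrow> (\<forall>f :: (nat \<Rightarrow> 'a) \<Rightarrow> complex. \<exists>u. represents n u f T)"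

definition maximal_good :: "nat \<Rightarrow> (nat \<Rightarrow> 'a) set \<Rightarrow> (nat \<Rightarrow> 'a) set \<Rightarrow> bool" where
  "maximal_good n S M \<longleftrightarrow> M \<subseteq> S \<and> good n M \<and>
     (\<forall>M'. M \<subseteq> M' \<and> M' \<subseteq> S \<and> good n M' \<longrightarrow> M' = M)"

definition full :: "nat \<Rightarrow> (nat \<Rightarrow> 'a) set \<Rightarrow> bool" where
  "full n T \<longleftrightarrow> maximal_good n (PiE {..<n} (\<lambda>i. proj i T)) T"

definition U :: "nat \<Rightarrow> (nat \<Rightarrow> 'a) set \<Rightarrow> ((nat \<Rightarrow> 'a) \<Rightarrow> complex) set" where
  "U n S = {f. \<exists>u. represents n u f S}"

definition relatively_full :: "nat \<Rightarrow> (nat \<Rightarrow> 'a) set \<Rightarrow> bool" where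
  "relatively_full n S \<longleftrightarrow> (\<exists>x0. (\<forall>i<n-1. x0 i \<in> proj i S) \<and>
     (\<forall>f\<in>U n S. \<forall>u v. represents n u f S \<and> represents n v f S \<and>
        (\<forall>i<n-1. u i (x0 i) = v i (x0 i)) \<longrightarrow>
        (\<forall>i<n. \<forall>y\<in>proj i S. u i y = v i y)))"

end

theory Submission
  imports Defs
begin

text \<open>Call u a relation of T if \<open>\<Sum>i<n. u i (x i)\<close> vanishes for all x in T. Adding a
  point s to a good set M keeps it good unless every relation of M vanishes at s; hence a
  maximal good subset M of S has the same relations as S. Relative fullness forces the
  components of a relation of S to be constant on the projections of S, so the relation
  vanishes on the whole box spanned by these projections, which contains the box spanned by
  the projections of M. But if M' is a good subset of the latter box and y is a point of M'
  outside M, a representation on M' of the indicator of y is a relation of M that does not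
  vanish at y.\<close>

lemma not_good_insert_relation:
  fixes M :: "(nat \<Rightarrow> 'a) set" and u :: "nat \<Rightarrow> 'a \<Rightarrow> complex"
  assumes good: "good n M" and not_good: "\<not> good n (insert s M)"
    and relation: "\<forall>x\<in>M. (\<Sum>i<n. u i (x i)) = 0"
  shows "(\<Sum>i<n. u i (s i)) = 0"
proof (rule ccontr)
  assume nonzero: "(\<Sum>i<n. u i (s i)) \<noteq> 0"
  have "\<exists>w'. represents n w' f (insert s M)" for f :: "(nat \<Rightarrow> 'a) \<Rightarrow> complex"
  proof -
    obtain w where w: "represents n w f M" using good unfolding good_def by blast
    define t where "t = (f s - (\<Sum>i<n. w i (s i))) / (\<Sum>i<n. u i (s i))"
    define w' where "w' = (\<lambda>i z. w i z + t * u i z)"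
    have "(\<Sum>i<n. w' i (x i)) = (\<Sum>i<n. w i (x i)) + t * (\<Sum>i<n. u i (x i))" for x
      unfolding w'_def by (simp add: sum.distrib sum_distrib_left)
    then have "represents n w' f (insert s M)"
      using w relation nonzero unfolding represents_def t_def by auto
    then show ?thesis by blast
  qed
  then show False using not_good unfolding good_def by blast
qed

lemma maximal_good_relation:
  fixes u :: "nat \<Rightarrow> 'a \<Rightarrow> complex"
  assumes max: "maximal_good n S M" and relation: "\<forall>x\<in>M. (\<Sum>i<n. u i (x i)) = 0"
    and s: "s \<in> S"
  shows "(\<Sum>i<n. u i (s i)) = 0"
proof (cases "s \<in> M")
  case True
  then show ?thesis using relation by blast
next
  case False
  have M_S: "M \<subseteq> S" and good: "good n M"
    and maximal: "\<And>M'. M \<subseteq> M' \<Longrightarrow> M' \<subseteq> S \<Longrightarrow> good n M' \<Longrightarrow> M' = M"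
    using max unfolding maximal_good_def by blast+
  have "\<not> good n (insert s M)"
    using maximal[of "insert s M"] False s M_S by blast
  then show ?thesis using not_good_insert_relation[OF good _ relation] by blast
qed

lemma relatively_full_relation_box:
  fixes u :: "nat \<Rightarrow> 'a \<Rightarrow> complex"
  assumes rf: "relatively_full n S" and relation: "\<forall>x\<in>S. (\<Sum>i<n. u i (x i)) = 0"
    and y: "\<forall>i<n. y i \<in> proj i S"
  shows "(\<Sum>i<n. u i (y i)) = 0"
proof (cases n)
  case 0
  then show ?thesis by simp
next
  case (Suc m)
  obtain x0 where unique: "\<forall>f\<in>U n S. \<forall>u v. represents n u f S \<and> represents n v f S \<and>
        (\<forall>i<n-1. u i (x0 i) = v i (x0 i)) \<longrightarrow> (\<forall>i<n. \<forall>z\<in>proj i S. u i z = v i z)"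
    using rf unfolding relatively_full_def by blast
  txt \<open>Shift u by constants summing to 0 so that it vanishes at the base points; by
    uniqueness the shifted family is then the zero representation of the zero function.\<close>
  define c where "c = (\<lambda>i. if i < m then u i (x0 i) else - (\<Sum>j<m. u j (x0 j)))"
  define v where "v = (\<lambda>i z. u i z - c i)"
  have "(\<Sum>i<n. c i) = 0" unfolding c_def Suc by simp
  then have v_sum: "(\<Sum>i<n. v i (x i)) = (\<Sum>i<n. u i (x i))" for x
    unfolding v_def by (simp add: sum_subtractf)
  have "represents n v (\<lambda>_. 0) S" and zero_rep: "represents n (\<lambda>_ _. 0) (\<lambda>_. 0) S"
    using relation v_sum unfolding represents_def by simp_all
  moreover have "(\<lambda>_. 0) \<in> U n S" using zero_rep unfolding U_def by blast
  moreover have "\<forall>i<n-1. v i (x0 i) = 0" unfolding v_def c_def Suc by simp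
  ultimately have "\<forall>i<n. \<forall>z\<in>proj i S. v i z = 0" using unique by blast
  then show ?thesis using y v_sum[of y] by simp
qed

lemma good_indicator_relation:
  assumes "good n T" and "y \<in> T"
  obtains u :: "nat \<Rightarrow> 'a \<Rightarrow> complex"
  where "\<forall>x\<in>T - {y}. (\<Sum>i<n. u i (x i)) = 0" and "(\<Sum>i<n. u i (y i)) = 1"
proof -
  obtain u where "represents n u (\<lambda>x. if x = y then 1 else 0) T"
    using assms(1) unfolding good_def by blast
  then have "(\<Sum>i<n. u i (x i)) = (if x = y then 1 else 0)" if "x \<in> T" for x
    using that unfolding represents_def by simp
  with assms(2) show ?thesis by (intro that[of u]) auto
qed

lemma proj_mono: "T \<subseteq> T' \<Longrightarrow> proj i T \<subseteq> proj i T'"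
  unfolding proj_def by blast

lemma subset_PiE_proj:
  assumes "T \<subseteq> PiE I X"
  shows "T \<subseteq> PiE I (\<lambda>i. proj i T)"
  using assms unfolding proj_def by (auto simp: PiE_iff)

theorem theorem5:
  fixes n :: nat and X :: "nat \<Rightarrow> 'a set" and S M :: "(nat \<Rightarrow> 'a) set"
  assumes "\<forall>i<n. X i \<noteq> {}"
    and "S \<subseteq> PiE {..<n} X"
    and "relatively_full n S"
    and "maximal_good n S M"
  shows "full n M"
proof -
  have M_S: "M \<subseteq> S" and good_M: "good n M"
    using assms(4) unfolding maximal_good_def by blast+
  have "M' = M" if M_M': "M \<subseteq> M'" and M'_box: "M' \<subseteq> PiE {..<n} (\<lambda>i. proj i M)"
    and good_M': "good n M'" for M'
  proof (rule ccontr)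
    assume "M' \<noteq> M"
    with M_M' obtain y where y: "y \<in> M'" "y \<notin> M" by blast
    obtain u :: "nat \<Rightarrow> 'a \<Rightarrow> complex" where relation: "\<forall>x\<in>M' - {y}. (\<Sum>i<n. u i (x i)) = 0"
      and at_y: "(\<Sum>i<n. u i (y i)) = 1"
      using good_indicator_relation[OF good_M' y(1)] by blast
    have "\<forall>x\<in>M. (\<Sum>i<n. u i (x i)) = 0"
      using relation M_M' y(2) by blast
    then have "\<forall>x\<in>S. (\<Sum>i<n. u i (x i)) = 0"
      using maximal_good_relation[OF assms(4)] by blast
    moreover have "\<forall>i<n. y i \<in> proj i S"
      using M'_box y(1) proj_mono[OF M_S] by (fastforce simp: PiE_iff)
    ultimately have "(\<Sum>i<n. u i (y i)) = 0"
      using relatively_full_relation_box[OF assms(3)] by blast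
    with at_y show False by simp
  qed
  moreover have "M \<subseteq> PiE {..<n} (\<lambda>i. proj i M)"
    using subset_PiE_proj M_S assms(2) by blast
  ultimately show ?thesis unfolding full_def maximal_good_def using good_M by blast
qed

end
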